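(* Fix $m\ge2$, $0<\epsilon<1/64$ and $B=\lfloor m/2\rfloor$. Suppose that for some integer $k\ge1$ there is a panel decision function $\widetilde x:\mathcal L^k\to\mathcal X_B$ such that for every participatory budgeting instance $\langle m,B,(\mathrm{Cost}_1,\dots,\mathrm{Cost}_n)\rangle$ (with $n\ge k$), $$\mathbb E_{S\sim\mathcal U_{k,n}}\big[\textsc{Social-Cost}(\widetilde x(S))\big]\le\textsc{Social-Opt}+\epsilon .$$ Then $k\ge c\, m/\epsilon^2$ for an absolute constant $c>0$ (i.e., $k=\Omega(m\cdot(1/\epsilon)^2)$).
   Context: A participatory budgeting instance $\langle m,B,(\mathrm{Cost}_1,\dots,\mathrm{Cost}_n)\rangle$: $m$ projects, budget $B>0$, and for each agent $i\in[n]$ a cost function $\mathrm{Cost}_i:[0,1]^m\to[0,1]$ that is monotone (non-increasing when the allocation increases coordinatewise) and $1$-Lipschitz w.r.t. $\|\cdot\|_1$. $\mathcal L$ denotes the set of all such $1$-Lipschitz functions $[0,1]^m\to[0,1]$, and $\mathcal X_B=\{x\in[0,1]^m:\sum_jx_j\le B\}$. For a panel $S$ of size $k$, $\widetilde x(S)$ denotes $\widetilde x$ applied to $(\mathrm{Cost}_i)_{i\in S}$. $\textsc{Social-Cost}(x)=\frac1n\sum_i\mathrm{Cost}_i(x)$ and $\textsc{Social-Opt}=\min_{x\in\mathcal X_B}\textsc{Social-Cost}(x)$. $\mathcal U_{k,n}$ is the uniform distribution over size-$k$ subsets of $[n]$. *)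

theory Defs
  imports "HOL-Analysis.Analysis"
begin

text \<open>Allocations in [0,1]^m are encoded as functions nat => real that vanish
  outside the index range {0..<m}.\<close>

type_synonym alloc = "nat \<Rightarrow> real"
type_synonym costfn = "alloc \<Rightarrow> real"

definition cube :: "nat \<Rightarrow> alloc set" where
  "cube m = {x. (\<forall>j<m. 0 \<le> x j \<and> x j \<le> 1) \<and> (\<forall>j\<ge>m. x j = 0)}"

definition alloc_space :: "nat \<Rightarrow> real \<Rightarrow> alloc set" where
  "alloc_space m B = {x \<in> cube m. (\<Sum>j<m. x j) \<le> B}"

definition lip_class :: "nat \<Rightarrow> costfn set" where
  "lip_class m = {f. (\<forall>x\<in>cube m. 0 \<le> f x \<and> f x \<le> 1) \<and>
     (\<forall>x\<in>cube m. \<forall>y\<in>cube m. \<bar>f x - f y\<bar> \<le> (\<Sum>j<m. \<bar>x j - y j\<bar>))}"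

definition pb_cost :: "nat \<Rightarrow> costfn \<Rightarrow> bool" where
  "pb_cost m f \<longleftrightarrow> f \<in> lip_class m \<and>
     (\<forall>x\<in>cube m. \<forall>y\<in>cube m. (\<forall>j<m. x j \<le> y j) \<longrightarrow> f y \<le> f x)"

definition social_cost :: "nat \<Rightarrow> (nat \<Rightarrow> costfn) \<Rightarrow> alloc \<Rightarrow> real" where
  "social_cost n Cost x = (\<Sum>i<n. Cost i x) / real n"

definition social_opt :: "nat \<Rightarrow> real \<Rightarrow> nat \<Rightarrow> (nat \<Rightarrow> costfn) \<Rightarrow> real" where
  "social_opt m B n Cost = (INF x\<in>alloc_space m B. social_cost n Cost x)"

definition panel_decision :: "(costfn list \<Rightarrow> alloc) \<Rightarrow> (nat \<Rightarrow> costfn) \<Rightarrow> nat set \<Rightarrow> alloc" where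
  "panel_decision xt Cost S = xt (map Cost (sorted_list_of_set S))"

definition panels :: "nat \<Rightarrow> nat \<Rightarrow> nat set set" where
  "panels k n = {S. S \<subseteq> {..<n} \<and> card S = k}"

definition expected_panel_cost ::
  "nat \<Rightarrow> (costfn list \<Rightarrow> alloc) \<Rightarrow> nat \<Rightarrow> (nat \<Rightarrow> costfn) \<Rightarrow> real" where
  "expected_panel_cost k xt n Cost =
     (\<Sum>S\<in>panels k n. social_cost n Cost (panel_decision xt Cost S)) / real (card (panels k n))"

end

(* Yao's principle on a family of hard instances. Group 2T = 2 * floor(m/2) projects
   into T pairs and let a hidden sigma choose the heavy project of each pair. Every
   agent is single-minded, with cost 1 - x_j for a favourite project j drawn independently
   with probability (1 + delta)/(2T) if j is heavy and (1 - delta)/(2T) otherwise, where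
   delta = 8 epsilon. Against one such agent, funding exactly the heavy projects beats an
   allocation x by at least delta/T times the unfunded heavy mass of x.
   A panel is a sample of k agents. If k delta^2 / T is small, then for most pairs the
   sample's imbalance between the two projects is O(1/delta), so toggling sigma on that
   pair changes the likelihood of the sample by at most a factor 2. Averaged over sigma,
   the panel thus finds the heavy project of a pair hardly better than a coin flip, and its
   expected excess cost is Omega(delta). Agents outside the panel are fresh samples,
   independent of its decision, so the epsilon-guarantee for n >> k agents forces
   k delta^2 / T = Omega(1), that is k = Omega(m / epsilon^2). *)

theory Submission
  imports Defs
begin

section \<open>Expectation under independent sampling\<close>

definition iid_expectation ::
  "('a \<Rightarrow> real) \<Rightarrow> 'a set \<Rightarrow> 'i set \<Rightarrow> (('i \<Rightarrow> 'a) \<Rightarrow> real) \<Rightarrow> real" where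
  "iid_expectation p J A h = (\<Sum>\<rho>\<in>A \<rightarrow>\<^sub>E J. (\<Prod>i\<in>A. p (\<rho> i)) * h \<rho>)"

lemma finite_if_sum_eq_1: "sum p J = (1::real) \<Longrightarrow> finite J"
  by (rule ccontr) simp

lemma iid_expectation_insert:
  assumes "finite A" "i \<notin> A"
  shows "iid_expectation p J (insert i A) h =
    (\<Sum>j\<in>J. p j * iid_expectation p J A (\<lambda>\<rho>. h (\<rho>(i := j))))"
proof -
  let ?upd = "\<lambda>(j, \<rho>). \<rho>(i := j)"
  have "iid_expectation p J (insert i A) h =
      (\<Sum>\<rho>\<in>?upd ` (J \<times> (A \<rightarrow>\<^sub>E J)). (\<Prod>x\<in>insert i A. p (\<rho> x)) * h \<rho>)"
    unfolding iid_expectation_def PiE_insert_eq ..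
  also have "\<dots> = (\<Sum>j\<rho>\<in>J \<times> (A \<rightarrow>\<^sub>E J). (\<Prod>x\<in>insert i A. p (?upd j\<rho> x)) * h (?upd j\<rho>))"
    using inj_combinator[OF assms(2), of "\<lambda>_. J"] by (subst sum.reindex) (auto simp: o_def)
  also have "\<dots> = (\<Sum>j\<in>J. \<Sum>\<rho>\<in>A \<rightarrow>\<^sub>E J. (\<Prod>x\<in>insert i A. p ((\<rho>(i := j)) x)) * h (\<rho>(i := j)))"
    by (subst sum.cartesian_product) (simp add: case_prod_unfold)
  also have "\<dots> = (\<Sum>j\<in>J. \<Sum>\<rho>\<in>A \<rightarrow>\<^sub>E J. p j * ((\<Prod>x\<in>A. p (\<rho> x)) * h (\<rho>(i := j))))"
  proof -
    have "(\<Prod>x\<in>A. p ((\<rho>(i := j)) x)) = (\<Prod>x\<in>A. p (\<rho> x))" for \<rho> j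
      using assms(2) by (intro prod.cong) auto
    then show ?thesis
      using assms by (simp add: mult.assoc)
  qed
  finally show ?thesis
    by (simp add: iid_expectation_def sum_distrib_left)
qed

lemma iid_expectation_const:
  assumes "finite A" "sum p J = 1"
  shows "iid_expectation p J A (\<lambda>_. c) = c"
proof -
  have "finite J"
    using assms(2) by (rule finite_if_sum_eq_1)
  then have "(\<Sum>\<rho>\<in>A \<rightarrow>\<^sub>E J. \<Prod>i\<in>A. p (\<rho> i)) = (\<Prod>i\<in>A. sum p J)"
    using prod_sum_PiE[of A "\<lambda>_. J" "\<lambda>_. p"] assms(1) by simp
  then show ?thesis
    using assms by (simp add: iid_expectation_def flip: sum_distrib_right)
qed

lemma iid_expectation_add:
  "iid_expectation p J A (\<lambda>\<rho>. f \<rho> + g \<rho>) = iid_expectation p J A f + iid_expectation p J A g"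
  unfolding iid_expectation_def by (simp add: distrib_left sum.distrib)

lemma iid_expectation_diff:
  "iid_expectation p J A (\<lambda>\<rho>. f \<rho> - g \<rho>) = iid_expectation p J A f - iid_expectation p J A g"
  unfolding iid_expectation_def by (simp add: right_diff_distrib sum_subtractf)

lemma iid_expectation_cmult:
  "iid_expectation p J A (\<lambda>\<rho>. c * f \<rho>) = c * iid_expectation p J A f"
  unfolding iid_expectation_def by (simp add: sum_distrib_left mult.left_commute)

lemma iid_expectation_sum:
  "iid_expectation p J A (\<lambda>\<rho>. \<Sum>x\<in>X. f x \<rho>) = (\<Sum>x\<in>X. iid_expectation p J A (f x))"
  unfolding iid_expectation_def by (simp add: sum_distrib_left sum.swap[of _ X])

lemma iid_expectation_mono:
  assumes "\<And>j. j \<in> J \<Longrightarrow> 0 \<le> p j" and "\<And>\<rho>. \<rho> \<in> A \<rightarrow>\<^sub>E J \<Longrightarrow> f \<rho> \<le> g \<rho>"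
  shows "iid_expectation p J A f \<le> iid_expectation p J A g"
  unfolding iid_expectation_def
  using assms by (intro sum_mono mult_left_mono prod_nonneg) (auto simp: PiE_iff)

lemma iid_expectation_change_weights:
  assumes "\<And>j. q j = p j * r j"
  shows "iid_expectation q J A h = iid_expectation p J A (\<lambda>\<rho>. (\<Prod>i\<in>A. r (\<rho> i)) * h \<rho>)"
  unfolding iid_expectation_def assms by (simp add: prod.distrib mult.assoc)

lemma iid_expectation_Un_irrelevant:
  assumes "finite C" "B \<inter> C = {}" "finite B" "sum p J = 1"
    and "\<And>\<rho> i j. i \<in> C \<Longrightarrow> h (\<rho>(i := j)) = h \<rho>"
  shows "iid_expectation p J (B \<union> C) h = iid_expectation p J B h"
  using assms
proof (induction C rule: finite_induct)
  case (insert x C)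
  have "(\<lambda>\<rho>. h (\<rho>(x := j))) = h" for j
    using insert.prems(4) by blast
  moreover have "iid_expectation p J (insert x (B \<union> C)) h =
      (\<Sum>j\<in>J. p j * iid_expectation p J (B \<union> C) (\<lambda>\<rho>. h (\<rho>(x := j))))"
    using insert by (intro iid_expectation_insert) auto
  ultimately have "iid_expectation p J (B \<union> insert x C) h =
      (\<Sum>j\<in>J. p j * iid_expectation p J (B \<union> C) h)"
    by simp
  also have "\<dots> = iid_expectation p J (B \<union> C) h"
    using insert.prems by (simp flip: sum_distrib_right)
  finally show ?case
    using insert by simp
qed simp

lemma iid_expectation_coordinate:
  assumes "finite A" "i \<in> A" "sum p J = 1"
  shows "iid_expectation p J A (\<lambda>\<rho>. f (\<rho> i)) = (\<Sum>j\<in>J. p j * f j)"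
proof -
  have "iid_expectation p J (insert i (A - {i})) (\<lambda>\<rho>. f (\<rho> i)) =
      (\<Sum>j\<in>J. p j * iid_expectation p J (A - {i}) (\<lambda>_. f j))"
    using assms by (subst iid_expectation_insert) auto
  moreover have "insert i (A - {i}) = A"
    using assms by auto
  ultimately show ?thesis
    using assms by (simp add: iid_expectation_const)
qed

lemma iid_expectation_square_sum:
  fixes Y :: "'a \<Rightarrow> real"
  assumes "finite S" "sum p J = 1"
  shows "iid_expectation p J S (\<lambda>\<rho>. (\<Sum>i\<in>S. Y (\<rho> i))\<^sup>2) =
    card S * (\<Sum>j\<in>J. p j * (Y j)\<^sup>2) + card S * (real (card S) - 1) * (\<Sum>j\<in>J. p j * Y j)\<^sup>2"
proof -
  define \<mu>1 where "\<mu>1 = (\<Sum>j\<in>J. p j * Y j)"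
  define \<mu>2 where "\<mu>2 = (\<Sum>j\<in>J. p j * (Y j)\<^sup>2)"
  have pair: "iid_expectation p J S (\<lambda>\<rho>. Y (\<rho> i) * Y (\<rho> i')) =
      \<mu>1\<^sup>2 + (if i = i' then \<mu>2 - \<mu>1\<^sup>2 else 0)"
    if "i \<in> S" "i' \<in> S" for i i'
  proof (cases "i = i'")
    case True
    have "iid_expectation p J S (\<lambda>\<rho>. (\<lambda>y. Y y * Y y) (\<rho> i)) = (\<Sum>j\<in>J. p j * (Y j * Y j))"
      by (rule iid_expectation_coordinate) (use assms that in auto)
    then show ?thesis
      using True by (simp add: \<mu>2_def power2_eq_square)
  next
    case False
    have "iid_expectation p J (insert i (S - {i})) (\<lambda>\<rho>. Y (\<rho> i) * Y (\<rho> i')) =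
        (\<Sum>j\<in>J. p j * iid_expectation p J (S - {i}) (\<lambda>\<rho>. Y j * Y (\<rho> i')))"
      using assms(1) False by (subst iid_expectation_insert) auto
    also have "\<dots> = (\<Sum>j\<in>J. p j * (Y j * \<mu>1))"
      using assms False that by (simp add: iid_expectation_cmult iid_expectation_coordinate \<mu>1_def)
    finally show ?thesis
      using that False
      by (simp add: insert_absorb \<mu>1_def sum_distrib_right mult_ac power2_eq_square)
  qed
  have "iid_expectation p J S (\<lambda>\<rho>. (\<Sum>i\<in>S. Y (\<rho> i))\<^sup>2) =
      (\<Sum>i\<in>S. \<Sum>i'\<in>S. iid_expectation p J S (\<lambda>\<rho>. Y (\<rho> i) * Y (\<rho> i')))"
    by (simp add: power2_eq_square sum_product iid_expectation_sum)
  also have "\<dots> = (\<Sum>i\<in>S. \<Sum>i'\<in>S. \<mu>1\<^sup>2 + (if i = i' then \<mu>2 - \<mu>1\<^sup>2 else 0))"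
    by (intro sum.cong refl pair)
  also have "\<dots> = (\<Sum>i\<in>S. card S * \<mu>1\<^sup>2 + (\<mu>2 - \<mu>1\<^sup>2))"
    using assms(1) by (intro sum.cong refl) (simp add: sum.distrib)
  also have "\<dots> = card S * card S * \<mu>1\<^sup>2 + card S * (\<mu>2 - \<mu>1\<^sup>2)"
    by (simp add: algebra_simps)
  finally show ?thesis
    unfolding \<mu>1_def[symmetric] \<mu>2_def[symmetric] by (simp add: algebra_simps)
qed

lemma iid_expectation_independent_coordinate:
  assumes "finite A" "S \<subseteq> A" "i \<in> A - S" "sum p J = 1"
    and "\<And>j \<rho> i' j'. i' \<notin> S \<Longrightarrow> h j (\<rho>(i' := j')) = h j \<rho>"
  shows "iid_expectation p J A (\<lambda>\<rho>. h (\<rho> i) \<rho>) = iid_expectation p J S (\<lambda>\<rho>. \<Sum>j\<in>J. p j * h j \<rho>)"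
proof -
  have A: "A = insert i (S \<union> (A - S - {i}))" "i \<notin> S \<union> (A - S - {i})"
    using assms(2,3) by auto
  have "iid_expectation p J A (\<lambda>\<rho>. h (\<rho> i) \<rho>) =
      (\<Sum>j\<in>J. p j * iid_expectation p J (S \<union> (A - S - {i})) (\<lambda>\<rho>. h j (\<rho>(i := j))))"
    using assms(1,2) A(2) by (subst A(1), subst iid_expectation_insert) (auto intro: finite_subset)
  also have "\<dots> = (\<Sum>j\<in>J. p j * iid_expectation p J S (h j))"
  proof -
    have "iid_expectation p J (S \<union> (A - S - {i})) (h j) = iid_expectation p J S (h j)" for j
      using assms by (intro iid_expectation_Un_irrelevant) (auto intro: finite_subset)
    then show ?thesis
      using assms(3,5) by simp
  qed
  finally show ?thesis
    by (simp add: iid_expectation_sum iid_expectation_cmult)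
qed

lemma sum_iid_expectation_ge_panel:
  assumes "finite A" "S \<subseteq> A" "sum p J = 1" "\<And>j. j \<in> J \<Longrightarrow> 0 \<le> p j"
    and "\<And>j \<rho> i' j'. i' \<notin> S \<Longrightarrow> h j (\<rho>(i' := j')) = h j \<rho>"
    and "\<And>j \<rho>. j \<in> J \<Longrightarrow> -1 \<le> h j \<rho>"
  shows "(\<Sum>i\<in>A. iid_expectation p J A (\<lambda>\<rho>. h (\<rho> i) \<rho>)) \<ge>
    real (card (A - S)) * iid_expectation p J S (\<lambda>\<rho>. \<Sum>j\<in>J. p j * h j \<rho>) - real (card S)"
proof -
  have lower: "iid_expectation p J A (\<lambda>\<rho>. h (\<rho> i) \<rho>) \<ge> -1" if "i \<in> A" for i
  proof -
    have "iid_expectation p J A (\<lambda>_. -1) \<le> iid_expectation p J A (\<lambda>\<rho>. h (\<rho> i) \<rho>)"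
      using assms(4,6) that by (intro iid_expectation_mono) (auto simp: PiE_iff)
    then show ?thesis
      using assms(1,3) by (simp add: iid_expectation_const)
  qed
  have "(\<Sum>i\<in>S. -1) \<le> (\<Sum>i\<in>S. iid_expectation p J A (\<lambda>\<rho>. h (\<rho> i) \<rho>))"
    using lower assms(2) by (intro sum_mono) auto
  then have "(\<Sum>i\<in>S. iid_expectation p J A (\<lambda>\<rho>. h (\<rho> i) \<rho>)) \<ge> - real (card S)"
    by simp
  moreover have "(\<Sum>i\<in>A - S. iid_expectation p J A (\<lambda>\<rho>. h (\<rho> i) \<rho>)) =
      (\<Sum>i\<in>A - S. iid_expectation p J S (\<lambda>\<rho>. \<Sum>j\<in>J. p j * h j \<rho>))"
    by (intro sum.cong refl iid_expectation_independent_coordinate[OF assms(1,2) _ assms(3,5)]) auto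
  ultimately show ?thesis
    using sum.subset_diff[OF assms(2,1), of "\<lambda>i. iid_expectation p J A (\<lambda>\<rho>. h (\<rho> i) \<rho>)"]
    by simp
qed

section \<open>The hard instances\<close>

(* Projects 2t and 2t+1 form pair t; sigma is the set of pairs whose even project is heavy. *)
definition heavy :: "nat set \<Rightarrow> nat \<Rightarrow> bool" where
  "heavy \<sigma> j \<longleftrightarrow> (even j \<longleftrightarrow> j div 2 \<in> \<sigma>)"

definition heavy_of :: "nat set \<Rightarrow> nat \<Rightarrow> nat" where
  "heavy_of \<sigma> t = (if t \<in> \<sigma> then 2 * t else 2 * t + 1)"

definition light_of :: "nat set \<Rightarrow> nat \<Rightarrow> nat" where
  "light_of \<sigma> t = (if t \<in> \<sigma> then 2 * t + 1 else 2 * t)"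

definition toggle :: "nat \<Rightarrow> nat set \<Rightarrow> nat set" where
  "toggle t \<sigma> = (if t \<in> \<sigma> then \<sigma> - {t} else insert t \<sigma>)"

definition hard_weight :: "nat \<Rightarrow> real \<Rightarrow> nat set \<Rightarrow> nat \<Rightarrow> real" where
  "hard_weight T \<delta> \<sigma> j = (if heavy \<sigma> j then 1 + \<delta> else 1 - \<delta>) / (2 * real T)"

definition heavy_alloc :: "nat \<Rightarrow> nat set \<Rightarrow> alloc" where
  "heavy_alloc T \<sigma> j = of_bool (j < 2 * T \<and> heavy \<sigma> j)"

(* Expected excess cost of x over heavy_alloc for one agent of the hard instance *)
definition regret :: "nat \<Rightarrow> real \<Rightarrow> nat set \<Rightarrow> alloc \<Rightarrow> real" where
  "regret T \<delta> \<sigma> x = (\<Sum>j<2 * T. hard_weight T \<delta> \<sigma> j * (heavy_alloc T \<sigma> j - x j))"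

definition pair_sign :: "nat set \<Rightarrow> nat \<Rightarrow> nat \<Rightarrow> int" where
  "pair_sign \<sigma> t j = of_bool (j = heavy_of \<sigma> t) - of_bool (j = light_of \<sigma> t)"

definition imbalance :: "nat set \<Rightarrow> nat \<Rightarrow> 'i set \<Rightarrow> ('i \<Rightarrow> nat) \<Rightarrow> int" where
  "imbalance \<sigma> t S \<omega> = (\<Sum>i\<in>S. pair_sign \<sigma> t (\<omega> i))"

definition balanced :: "real \<Rightarrow> nat set \<Rightarrow> nat \<Rightarrow> 'i set \<Rightarrow> ('i \<Rightarrow> nat) \<Rightarrow> bool" where
  "balanced \<delta> \<sigma> t S \<omega> \<longleftrightarrow> 4 * \<delta> * \<bar>imbalance \<sigma> t S \<omega>\<bar> \<le> 1"

abbreviation hard_expectation ::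
  "nat \<Rightarrow> real \<Rightarrow> nat set \<Rightarrow> 'i set \<Rightarrow> (('i \<Rightarrow> nat) \<Rightarrow> real) \<Rightarrow> real" where
  "hard_expectation T \<delta> \<sigma> \<equiv> iid_expectation (hard_weight T \<delta> \<sigma>) {..<2 * T}"

lemma sum_lessThan_double: "(\<Sum>j<2 * (T::nat). f j) = (\<Sum>t<T. f (2 * t) + f (2 * t + 1))"
  by (induction T) (auto simp: add_ac)

lemma heavy_heavy_of: "heavy \<sigma> (heavy_of \<sigma> t)"
  and not_heavy_light_of: "\<not> heavy \<sigma> (light_of \<sigma> t)"
  and heavy_of_ne_light_of: "heavy_of \<sigma> t \<noteq> light_of \<sigma> t"
  by (auto simp: heavy_def heavy_of_def light_of_def)

lemma heavy_of_less: "t < T \<Longrightarrow> heavy_of \<sigma> t < 2 * T"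
  and light_of_less: "t < T \<Longrightarrow> light_of \<sigma> t < 2 * T"
  by (auto simp: heavy_of_def light_of_def)

lemma heavy_of_toggle: "heavy_of (toggle t \<sigma>) t = light_of \<sigma> t"
  by (auto simp: heavy_of_def light_of_def toggle_def)

lemma heavy_toggle:
  "heavy (toggle t \<sigma>) j \<longleftrightarrow> (if j = heavy_of \<sigma> t \<or> j = light_of \<sigma> t then \<not> heavy \<sigma> j else heavy \<sigma> j)"
proof -
  have "j div 2 = t \<longleftrightarrow> j = 2 * t \<or> j = 2 * t + 1"
    by auto
  then show ?thesis
    by (auto simp: heavy_def toggle_def heavy_of_def light_of_def)
qed

lemma sum_Pow_toggle:
  assumes "t < T"
  shows "(\<Sum>\<sigma>\<in>Pow {..<T}. f (toggle t \<sigma>)) = (\<Sum>\<sigma>\<in>Pow {..<T}. f \<sigma>)"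
  by (rule sum.reindex_bij_witness[where i = "toggle t" and j = "toggle t"])
    (use assms in \<open>auto simp: toggle_def\<close>)

lemma hard_weight_nonneg: "\<bar>\<delta>\<bar> \<le> 1 \<Longrightarrow> 0 \<le> hard_weight T \<delta> \<sigma> j"
  by (simp add: hard_weight_def)

lemma sum_hard_weight:
  assumes "T \<ge> 1"
  shows "(\<Sum>j<2 * T. hard_weight T \<delta> \<sigma> j) = 1"
proof -
  have "hard_weight T \<delta> \<sigma> (2 * t) + hard_weight T \<delta> \<sigma> (2 * t + 1) = 1 / T" for t
    using assms by (auto simp: hard_weight_def heavy_def field_simps)
  then show ?thesis
    using assms by (simp add: sum_lessThan_double)
qed

lemma hard_weight_toggle:
  assumes "0 < \<delta>" "\<delta> < 1"
  shows "hard_weight T \<delta> (toggle t \<sigma>) j =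
    hard_weight T \<delta> \<sigma> j * ((1 - \<delta>) / (1 + \<delta>)) powi pair_sign \<sigma> t j"
  using assms heavy_heavy_of[of \<sigma> t] not_heavy_light_of[of \<sigma> t] heavy_of_ne_light_of[of \<sigma> t]
  by (auto simp: hard_weight_def heavy_toggle pair_sign_def power_int_minus)

lemma cube_bounds: "x \<in> cube m \<Longrightarrow> 0 \<le> x j \<and> x j \<le> 1"
  by (cases "j < m") (auto simp: cube_def)

lemma alloc_space_bounds: "x \<in> alloc_space m B \<Longrightarrow> 0 \<le> x j \<and> x j \<le> 1"
  unfolding alloc_space_def using cube_bounds by blast

lemma alloc_space_sum_lessThan_le:
  assumes "x \<in> alloc_space m B" "2 * T \<le> m"
  shows "(\<Sum>j<2 * T. x j) \<le> B"
proof -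
  have "(\<Sum>j<2 * T. x j) \<le> (\<Sum>j<m. x j)"
    using assms by (intro sum_mono2) (auto simp: alloc_space_def cube_def)
  then show ?thesis
    using assms(1) by (simp add: alloc_space_def)
qed

lemma regret_ge:
  assumes "x \<in> alloc_space m (real T)" "2 * T \<le> m" "T \<ge> 1" "\<delta> \<le> 1"
  shows "\<delta> / T * (\<Sum>t<T. 1 - x (heavy_of \<sigma> t)) \<le> regret T \<delta> \<sigma> x"
proof -
  let ?w = "(1 - \<delta>) / (2 * real T)"
  have slack: "(\<Sum>t<T. 1 - (x (2 * t) + x (2 * t + 1))) = T - (\<Sum>j<2 * T. x j)"
    by (simp add: sum_subtractf sum_lessThan_double[of x])
  have "regret T \<delta> \<sigma> x =
      (\<Sum>t<T. \<delta> / T * (1 - x (heavy_of \<sigma> t)) + ?w * (1 - (x (2 * t) + x (2 * t + 1))))"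
    unfolding regret_def sum_lessThan_double
    using assms(3) by (intro sum.cong refl)
      (auto simp: hard_weight_def heavy_alloc_def heavy_def heavy_of_def field_simps)
  also have "\<dots> = \<delta> / T * (\<Sum>t<T. 1 - x (heavy_of \<sigma> t)) + ?w * (T - (\<Sum>j<2 * T. x j))"
    by (simp only: sum.distrib slack flip: sum_distrib_left)
  finally show ?thesis
    using alloc_space_sum_lessThan_le[OF assms(1,2)] assms(4) by simp
qed

section \<open>A small sample cannot locate the heavy projects\<close>

lemma prod_power_int_sum:
  fixes x :: "'a :: field"
  assumes "x \<noteq> 0"
  shows "(\<Prod>i\<in>S. x powi f i) = x powi (\<Sum>i\<in>S. f i)"
  by (induction S rule: infinite_finite_induct) (simp_all add: assms power_int_add)

lemma tilt_power_int_ge_half: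
  fixes \<delta> :: real and D :: int
  assumes "0 < \<delta>" "\<delta> \<le> 1/2" "4 * \<delta> * D \<le> 1"
  shows "((1 - \<delta>) / (1 + \<delta>)) powi D \<ge> 1/2"
proof (cases "D \<le> 0")
  case True
  have "((1 - \<delta>) / (1 + \<delta>)) powi D = ((1 + \<delta>) / (1 - \<delta>)) powi (- D)"
    by (simp add: power_int_minus power_int_divide_distrib)
  also have "1 \<le> \<dots>"
    using assms True by (intro one_le_power_int) auto
  finally show ?thesis
    by linarith
next
  case False
  have "1 - 2 * \<delta> * D \<le> (1 - 2 * \<delta>) ^ nat D"
    using Bernoulli_inequality[of "- 2 * \<delta>" "nat D"] assms False by (simp add: mult.commute)
  also have "\<dots> \<le> ((1 - \<delta>) / (1 + \<delta>)) ^ nat D"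
    using assms by (intro power_mono) (auto simp: field_simps)
  also have "\<dots> = ((1 - \<delta>) / (1 + \<delta>)) powi D"
    using False by (simp add: power_int_nonneg_exp)
  finally show ?thesis
    using assms(3) by linarith
qed

(* Toggling pair t multiplies the likelihood of a sample by ((1 - delta)/(1 + delta)) powi
   imbalance, which is at least 1/2 on balanced samples. *)
lemma hard_expectation_toggle_ge:
  assumes "finite S" "0 < \<delta>" "\<delta> \<le> 1/2"
    and "\<And>\<omega>. \<omega> \<in> S \<rightarrow>\<^sub>E {..<2 * T} \<Longrightarrow> 0 \<le> f \<omega>"
  shows "1/2 * hard_expectation T \<delta> \<sigma> S (\<lambda>\<omega>. of_bool (balanced \<delta> \<sigma> t S \<omega>) * f \<omega>)
    \<le> hard_expectation T \<delta> (toggle t \<sigma>) S f"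
proof -
  let ?a = "(1 - \<delta>) / (1 + \<delta>)"
  have "hard_expectation T \<delta> (toggle t \<sigma>) S f =
      hard_expectation T \<delta> \<sigma> S (\<lambda>\<omega>. ?a powi imbalance \<sigma> t S \<omega> * f \<omega>)"
    using assms(2,3) by (simp add: iid_expectation_change_weights[OF hard_weight_toggle]
        prod_power_int_sum imbalance_def)
  also have "\<dots> \<ge> hard_expectation T \<delta> \<sigma> S (\<lambda>\<omega>. 1/2 * (of_bool (balanced \<delta> \<sigma> t S \<omega>) * f \<omega>))"
  proof (intro iid_expectation_mono)
    fix \<omega> assume \<omega>: "\<omega> \<in> S \<rightarrow>\<^sub>E {..<2 * T}"
    have "of_bool (balanced \<delta> \<sigma> t S \<omega>) / 2 \<le> ?a powi imbalance \<sigma> t S \<omega>"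
    proof (cases "balanced \<delta> \<sigma> t S \<omega>")
      case True
      have "4 * \<delta> * imbalance \<sigma> t S \<omega> \<le> 4 * \<delta> * \<bar>imbalance \<sigma> t S \<omega>\<bar>"
        using assms(2) by (intro mult_left_mono) auto
      with True have "4 * \<delta> * imbalance \<sigma> t S \<omega> \<le> 1"
        unfolding balanced_def by linarith
      from tilt_power_int_ge_half[OF assms(2,3) this] show ?thesis
        using True by simp
    qed (use assms(2,3) in simp)
    then have "of_bool (balanced \<delta> \<sigma> t S \<omega>) / 2 * f \<omega> \<le> ?a powi imbalance \<sigma> t S \<omega> * f \<omega>"
      using assms(4)[OF \<omega>] by (rule mult_right_mono)
    then show "1/2 * (of_bool (balanced \<delta> \<sigma> t S \<omega>) * f \<omega>) \<le> ?a powi imbalance \<sigma> t S \<omega> * f \<omega>"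
      by simp
  qed (use assms(2,3) in \<open>auto intro: hard_weight_nonneg\<close>)
  finally show ?thesis
    by (simp only: iid_expectation_cmult)
qed

lemma hard_expectation_imbalance_square:
  fixes \<delta> :: real
  assumes "T \<ge> 1" "t < T" "finite S"
  shows "hard_expectation T \<delta> \<sigma> S (\<lambda>\<omega>. (real_of_int (imbalance \<sigma> t S \<omega>))\<^sup>2)
    \<le> card S / T + (real (card S))\<^sup>2 * \<delta>\<^sup>2 / (real T)\<^sup>2"
proof -
  let ?p = "hard_weight T \<delta> \<sigma>" and ?Y = "\<lambda>j. real_of_int (pair_sign \<sigma> t j)"
  have H: "heavy_of \<sigma> t \<in> {..<2 * T}" and L: "light_of \<sigma> t \<in> {..<2 * T}"
    using assms(2) by (auto intro: heavy_of_less light_of_less)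
  have weights: "?p (heavy_of \<sigma> t) = (1 + \<delta>) / (2 * T)" "?p (light_of \<sigma> t) = (1 - \<delta>) / (2 * T)"
    by (simp_all add: hard_weight_def heavy_heavy_of not_heavy_light_of)
  have "(\<Sum>j<2 * T. ?p j * ?Y j) = ?p (heavy_of \<sigma> t) - ?p (light_of \<sigma> t)"
    and "(\<Sum>j<2 * T. ?p j * (?Y j)\<^sup>2) = ?p (heavy_of \<sigma> t) + ?p (light_of \<sigma> t)"
  proof -
    have "{..<2 * T} \<inter> {j. j = heavy_of \<sigma> t} = {heavy_of \<sigma> t}"
      and "{..<2 * T} \<inter> {j. j = light_of \<sigma> t} = {light_of \<sigma> t}"
      using H L by auto
    moreover have "?Y j = of_bool (j = heavy_of \<sigma> t) - of_bool (j = light_of \<sigma> t)"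
      and "(?Y j)\<^sup>2 = of_bool (j = heavy_of \<sigma> t) + of_bool (j = light_of \<sigma> t)" for j
      using heavy_of_ne_light_of[of \<sigma> t] by (auto simp: pair_sign_def)
    ultimately show "(\<Sum>j<2 * T. ?p j * ?Y j) = ?p (heavy_of \<sigma> t) - ?p (light_of \<sigma> t)"
      and "(\<Sum>j<2 * T. ?p j * (?Y j)\<^sup>2) = ?p (heavy_of \<sigma> t) + ?p (light_of \<sigma> t)"
      by (simp_all add: distrib_left right_diff_distrib sum.distrib sum_subtractf)
  qed
  then have moments: "(\<Sum>j<2 * T. ?p j * ?Y j) = \<delta> / T" "(\<Sum>j<2 * T. ?p j * (?Y j)\<^sup>2) = 1 / T"
    unfolding weights by (simp_all flip: diff_divide_distrib add_divide_distrib)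
  have "hard_expectation T \<delta> \<sigma> S (\<lambda>\<omega>. (real_of_int (imbalance \<sigma> t S \<omega>))\<^sup>2) =
      card S * (1 / T) + card S * (real (card S) - 1) * (\<delta> / T)\<^sup>2"
    using iid_expectation_square_sum[OF assms(3) sum_hard_weight[OF assms(1), of \<delta> \<sigma>], where Y = ?Y]
      moments by (simp add: imbalance_def)
  also have "\<dots> \<le> card S * (1 / T) + card S * card S * (\<delta> / T)\<^sup>2"
    by (intro add_left_mono mult_right_mono mult_left_mono) (auto simp: algebra_simps)
  also have "\<dots> = card S / T + (real (card S))\<^sup>2 * \<delta>\<^sup>2 / (real T)\<^sup>2"
    by (simp add: power2_eq_square)
  finally show ?thesis .
qed

lemma hard_expectation_unbalanced_le:
  fixes \<delta> :: real
  assumes "T \<ge> 1" "t < T" "finite S" "0 < \<delta>" "\<delta> \<le> 1" "card S * \<delta>\<^sup>2 / T \<le> 1/256"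
  shows "hard_expectation T \<delta> \<sigma> S (\<lambda>\<omega>. of_bool (\<not> balanced \<delta> \<sigma> t S \<omega>)) \<le> 1/8"
proof -
  define q where "q = card S * \<delta>\<^sup>2 / T"
  have "of_bool (\<not> balanced \<delta> \<sigma> t S \<omega>) \<le> 16 * \<delta>\<^sup>2 * (real_of_int (imbalance \<sigma> t S \<omega>))\<^sup>2" for \<omega>
  proof (cases "balanced \<delta> \<sigma> t S \<omega>")
    case False
    then have gt1: "1 < 4 * \<delta> * \<bar>imbalance \<sigma> t S \<omega>\<bar>"
      by (simp add: balanced_def)
    then have "1 < (4 * \<delta> * \<bar>imbalance \<sigma> t S \<omega>\<bar>)\<^sup>2"
      using less_1_mult[OF gt1 gt1] by (simp only: power2_eq_square)
    then show ?thesis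
      using False by (simp add: power_mult_distrib)
  qed simp
  then have "hard_expectation T \<delta> \<sigma> S (\<lambda>\<omega>. of_bool (\<not> balanced \<delta> \<sigma> t S \<omega>))
      \<le> 16 * \<delta>\<^sup>2 * hard_expectation T \<delta> \<sigma> S (\<lambda>\<omega>. (real_of_int (imbalance \<sigma> t S \<omega>))\<^sup>2)"
    using assms(4,5) unfolding iid_expectation_cmult[symmetric]
    by (intro iid_expectation_mono) (auto intro: hard_weight_nonneg)
  also have "\<dots> \<le> 16 * \<delta>\<^sup>2 * (card S / T + (real (card S))\<^sup>2 * \<delta>\<^sup>2 / (real T)\<^sup>2)"
    using hard_expectation_imbalance_square[OF assms(1-3)] by (intro mult_left_mono) auto
  also have "\<dots> = 16 * (q + q\<^sup>2)"
    using assms(1) by (simp add: q_def field_simps power2_eq_square)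
  also have "\<dots> \<le> 16 * (1/256 + (1/256)\<^sup>2)"
    using assms(6) unfolding q_def[symmetric]
    by (intro mult_left_mono add_mono power_mono) (auto simp: q_def)
  finally show ?thesis
    by (simp add: power2_eq_square)
qed

(* Pairing sigma with toggle t sigma: on balanced samples the panel cannot tell which project
   of pair t is heavy. *)
lemma sum_hard_expectation_heavy_ge:
  assumes "t < T" "finite S" "0 < \<delta>" "\<delta> \<le> 1/2" "\<And>\<omega> j. 0 \<le> f \<omega> j"
  shows "1/4 * (\<Sum>\<sigma>\<in>Pow {..<T}. hard_expectation T \<delta> \<sigma> S
      (\<lambda>\<omega>. of_bool (balanced \<delta> \<sigma> t S \<omega>) * (f \<omega> (2 * t) + f \<omega> (2 * t + 1))))
    \<le> (\<Sum>\<sigma>\<in>Pow {..<T}. hard_expectation T \<delta> \<sigma> S (\<lambda>\<omega>. f \<omega> (heavy_of \<sigma> t)))"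
proof -
  let ?b = "\<lambda>\<sigma> \<omega>. of_bool (balanced \<delta> \<sigma> t S \<omega>) :: real"
  have half: "1/2 * hard_expectation T \<delta> \<sigma> S (\<lambda>\<omega>. ?b \<sigma> \<omega> * (f \<omega> (2 * t) + f \<omega> (2 * t + 1)))
      \<le> hard_expectation T \<delta> \<sigma> S (\<lambda>\<omega>. f \<omega> (heavy_of \<sigma> t))
        + hard_expectation T \<delta> (toggle t \<sigma>) S (\<lambda>\<omega>. f \<omega> (light_of \<sigma> t))" for \<sigma>
  proof -
    have "1/2 * hard_expectation T \<delta> \<sigma> S (\<lambda>\<omega>. ?b \<sigma> \<omega> * f \<omega> (heavy_of \<sigma> t))
        \<le> hard_expectation T \<delta> \<sigma> S (\<lambda>\<omega>. f \<omega> (heavy_of \<sigma> t))"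
      unfolding iid_expectation_cmult[symmetric] using assms(3-5)
      by (intro iid_expectation_mono) (auto intro: hard_weight_nonneg)
    moreover have "1/2 * hard_expectation T \<delta> \<sigma> S (\<lambda>\<omega>. ?b \<sigma> \<omega> * f \<omega> (light_of \<sigma> t))
        \<le> hard_expectation T \<delta> (toggle t \<sigma>) S (\<lambda>\<omega>. f \<omega> (light_of \<sigma> t))"
      using assms by (intro hard_expectation_toggle_ge) auto
    moreover have "f \<omega> (2 * t) + f \<omega> (2 * t + 1) = f \<omega> (heavy_of \<sigma> t) + f \<omega> (light_of \<sigma> t)" for \<omega>
      by (auto simp: heavy_of_def light_of_def)
    ultimately show ?thesis
      by (simp add: distrib_left iid_expectation_add)
  qed
  have "(\<Sum>\<sigma>\<in>Pow {..<T}. hard_expectation T \<delta> (toggle t \<sigma>) S (\<lambda>\<omega>. f \<omega> (light_of \<sigma> t)))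
      = (\<Sum>\<sigma>\<in>Pow {..<T}. hard_expectation T \<delta> \<sigma> S (\<lambda>\<omega>. f \<omega> (heavy_of \<sigma> t)))"
    using sum_Pow_toggle[OF assms(1), of "\<lambda>\<sigma>. hard_expectation T \<delta> \<sigma> S (\<lambda>\<omega>. f \<omega> (heavy_of \<sigma> t))"]
    by (simp add: heavy_of_toggle)
  moreover have "(\<Sum>\<sigma>\<in>Pow {..<T}. 1/2 * hard_expectation T \<delta> \<sigma> S
        (\<lambda>\<omega>. ?b \<sigma> \<omega> * (f \<omega> (2 * t) + f \<omega> (2 * t + 1))))
      \<le> (\<Sum>\<sigma>\<in>Pow {..<T}. hard_expectation T \<delta> \<sigma> S (\<lambda>\<omega>. f \<omega> (heavy_of \<sigma> t))
        + hard_expectation T \<delta> (toggle t \<sigma>) S (\<lambda>\<omega>. f \<omega> (light_of \<sigma> t)))"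
    by (intro sum_mono half)
  ultimately show ?thesis
    by (simp only: sum.distrib flip: sum_distrib_left)
qed

lemma hard_expectation_balanced_slack_ge:
  fixes \<delta> :: real
  assumes "T \<ge> 1" "2 * T \<le> m" "finite S" "0 < \<delta>" "\<delta> \<le> 1" "card S * \<delta>\<^sup>2 / T \<le> 1/256"
    and "\<And>\<omega>. F \<omega> \<in> alloc_space m (real T)"
  shows "3 * real T / 4 \<le> hard_expectation T \<delta> \<sigma> S
    (\<lambda>\<omega>. \<Sum>t<T. of_bool (balanced \<delta> \<sigma> t S \<omega>) * (1 - F \<omega> (2 * t) + (1 - F \<omega> (2 * t + 1))))"
proof -
  let ?u = "\<lambda>\<omega> t. 1 - F \<omega> (2 * t) + (1 - F \<omega> (2 * t + 1))"
  have pointwise: "real T - 2 * (\<Sum>t<T. of_bool (\<not> balanced \<delta> \<sigma> t S \<omega>))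
      \<le> (\<Sum>t<T. of_bool (balanced \<delta> \<sigma> t S \<omega>) * ?u \<omega> t)" for \<omega>
  proof -
    have F: "0 \<le> F \<omega> j \<and> F \<omega> j \<le> 1" for j
      using alloc_space_bounds[OF assms(7)] by auto
    have "(\<Sum>t<T. ?u \<omega> t) = 2 * T - (\<Sum>j<2 * T. F \<omega> j)"
      by (simp add: sum_lessThan_double[of "F \<omega>"] sum.distrib sum_subtractf sum_negf)
    then have "T \<le> (\<Sum>t<T. ?u \<omega> t)"
      using alloc_space_sum_lessThan_le[OF assms(7,2)] by simp
    moreover have "(\<Sum>t<T. ?u \<omega> t - 2 * of_bool (\<not> balanced \<delta> \<sigma> t S \<omega>))
        \<le> (\<Sum>t<T. of_bool (balanced \<delta> \<sigma> t S \<omega>) * ?u \<omega> t)"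
    proof (intro sum_mono)
      fix t
      show "?u \<omega> t - 2 * of_bool (\<not> balanced \<delta> \<sigma> t S \<omega>) \<le> of_bool (balanced \<delta> \<sigma> t S \<omega>) * ?u \<omega> t"
        using F[of "2 * t"] F[of "2 * t + 1"] by auto
    qed
    ultimately show ?thesis
      by (simp add: sum_subtractf sum_distrib_left)
  qed
  have "(\<Sum>t<T. hard_expectation T \<delta> \<sigma> S (\<lambda>\<omega>. of_bool (\<not> balanced \<delta> \<sigma> t S \<omega>))) \<le> (\<Sum>t<T. 1/8)"
    using assms(1,3-6) by (intro sum_mono hard_expectation_unbalanced_le) auto
  then have "3 * real T / 4 \<le>
      real T - 2 * (\<Sum>t<T. hard_expectation T \<delta> \<sigma> S (\<lambda>\<omega>. of_bool (\<not> balanced \<delta> \<sigma> t S \<omega>)))"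
    by simp
  also have "\<dots> =
      hard_expectation T \<delta> \<sigma> S (\<lambda>\<omega>. real T - 2 * (\<Sum>t<T. of_bool (\<not> balanced \<delta> \<sigma> t S \<omega>)))"
    using assms(1) sum_hard_weight[OF assms(1)]
    by (simp add: iid_expectation_diff iid_expectation_cmult iid_expectation_sum iid_expectation_const
        assms(3) del: sum_of_bool_eq)
  also have "\<dots> \<le> hard_expectation T \<delta> \<sigma> S (\<lambda>\<omega>. \<Sum>t<T. of_bool (balanced \<delta> \<sigma> t S \<omega>) * ?u \<omega> t)"
    using assms(4,5) pointwise by (intro iid_expectation_mono) (auto intro: hard_weight_nonneg)
  finally show ?thesis .
qed

lemma sum_hard_expectation_regret_ge:
  fixes \<delta> :: real
  assumes "T \<ge> 1" "2 * T \<le> m" "finite S" "0 < \<delta>" "\<delta> \<le> 1/2" "card S * \<delta>\<^sup>2 / T \<le> 1/256"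
    and F: "\<And>\<omega>. F \<omega> \<in> alloc_space m (real T)"
  shows "2 ^ T * (3 * \<delta> / 16) \<le> (\<Sum>\<sigma>\<in>Pow {..<T}. hard_expectation T \<delta> \<sigma> S (\<lambda>\<omega>. regret T \<delta> \<sigma> (F \<omega>)))"
proof -
  let ?E = "\<lambda>\<sigma>. hard_expectation T \<delta> \<sigma> S"
  let ?f = "\<lambda>\<omega> j. 1 - F \<omega> j"
  have nonneg: "0 \<le> ?f \<omega> j" for \<omega> j
    using alloc_space_bounds[OF F] by auto
  have "2 ^ T * (3 * \<delta> / 16) = \<delta> / T * (1/4 * (\<Sum>\<sigma>\<in>Pow {..<T}. 3 * real T / 4))"
    using assms(1) by (simp add: card_Pow)
  also have "\<dots> \<le> \<delta> / T * (1/4 * (\<Sum>\<sigma>\<in>Pow {..<T}. ?E \<sigma>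
      (\<lambda>\<omega>. \<Sum>t<T. of_bool (balanced \<delta> \<sigma> t S \<omega>) * (?f \<omega> (2 * t) + ?f \<omega> (2 * t + 1)))))"
    using assms hard_expectation_balanced_slack_ge[OF assms(1-4) _ assms(6) F]
    by (intro mult_left_mono sum_mono) auto
  also have "\<dots> = \<delta> / T * (\<Sum>t<T. 1/4 * (\<Sum>\<sigma>\<in>Pow {..<T}. ?E \<sigma>
      (\<lambda>\<omega>. of_bool (balanced \<delta> \<sigma> t S \<omega>) * (?f \<omega> (2 * t) + ?f \<omega> (2 * t + 1)))))"
    unfolding iid_expectation_sum sum_distrib_left by (rule sum.swap)
  also have "\<dots> \<le> \<delta> / T * (\<Sum>t<T. \<Sum>\<sigma>\<in>Pow {..<T}. ?E \<sigma> (\<lambda>\<omega>. ?f \<omega> (heavy_of \<sigma> t)))"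
    using assms(3-5) nonneg
    by (intro mult_left_mono sum_mono sum_hard_expectation_heavy_ge) auto
  also have "\<dots> = (\<Sum>\<sigma>\<in>Pow {..<T}. \<delta> / T * (\<Sum>t<T. ?E \<sigma> (\<lambda>\<omega>. ?f \<omega> (heavy_of \<sigma> t))))"
    unfolding sum_distrib_left by (rule sum.swap)
  also have "\<dots> \<le> (\<Sum>\<sigma>\<in>Pow {..<T}. ?E \<sigma> (\<lambda>\<omega>. regret T \<delta> \<sigma> (F \<omega>)))"
  proof (intro sum_mono)
    fix \<sigma>
    have "\<delta> / T * (\<Sum>t<T. ?E \<sigma> (\<lambda>\<omega>. ?f \<omega> (heavy_of \<sigma> t))) =
        ?E \<sigma> (\<lambda>\<omega>. \<delta> / T * (\<Sum>t<T. ?f \<omega> (heavy_of \<sigma> t)))"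
      by (simp only: iid_expectation_cmult iid_expectation_sum)
    also have "\<dots> \<le> ?E \<sigma> (\<lambda>\<omega>. regret T \<delta> \<sigma> (F \<omega>))"
      using assms
      by (intro iid_expectation_mono regret_ge[OF F assms(2,1)]) (auto intro: hard_weight_nonneg)
    finally show "\<delta> / T * (\<Sum>t<T. ?E \<sigma> (\<lambda>\<omega>. ?f \<omega> (heavy_of \<sigma> t)))
        \<le> ?E \<sigma> (\<lambda>\<omega>. regret T \<delta> \<sigma> (F \<omega>))" .
  qed
  finally show ?thesis .
qed

section \<open>Single-minded agents and the panel guarantee\<close>

definition single_minded :: "nat \<Rightarrow> costfn" where
  "single_minded j x = 1 - x j"

lemma single_minded_lip_class: "single_minded j \<in> lip_class m"
proof -
  have "\<bar>x j - y j\<bar> \<le> (\<Sum>i<m. \<bar>x i - y i\<bar>)" if "x \<in> cube m" "y \<in> cube m" for x y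
  proof (cases "j < m")
    case True
    then show ?thesis
      by (intro member_le_sum) auto
  next
    case False
    then show ?thesis
      using that by (simp add: cube_def sum_nonneg)
  qed
  then show ?thesis
    using cube_bounds by (auto simp: lip_class_def single_minded_def abs_minus_commute)
qed

lemma pb_cost_single_minded: "pb_cost m (single_minded j)"
  using single_minded_lip_class
  by (cases "j < m") (auto simp: pb_cost_def single_minded_def cube_def)

lemma heavy_alloc_in_alloc_space:
  assumes "2 * T \<le> m"
  shows "heavy_alloc T \<sigma> \<in> alloc_space m (real T)"
proof -
  have "(\<Sum>j<m. heavy_alloc T \<sigma> j) = (\<Sum>j<2 * T. heavy_alloc T \<sigma> j)"
    using assms by (intro sum.mono_neutral_right) (auto simp: heavy_alloc_def)
  also have "\<dots> = (\<Sum>t<T. 1)"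
    unfolding sum_lessThan_double by (intro sum.cong refl) (auto simp: heavy_alloc_def heavy_def)
  finally show ?thesis
    using assms by (auto simp: alloc_space_def cube_def heavy_alloc_def)
qed

lemma finite_panels: "finite (panels k n)"
  unfolding panels_def by (rule finite_subset[of _ "Pow {..<n}"]) auto

lemma panel_decision_cong:
  assumes "\<And>i. i \<in> S \<Longrightarrow> C i = C' i"
  shows "panel_decision xt C S = panel_decision xt C' S"
  using assms by (cases "finite S") (auto simp: panel_decision_def intro!: arg_cong[where f = xt])

lemma panel_decision_single_minded:
  assumes "\<And>fs. length fs = k \<Longrightarrow> set fs \<subseteq> lip_class m \<Longrightarrow> xt fs \<in> alloc_space m B"
    and "S \<in> panels k n"
  shows "panel_decision xt (\<lambda>i. single_minded (\<omega> i)) S \<in> alloc_space m B"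
  unfolding panel_decision_def
  using assms(2) single_minded_lip_class
  by (intro assms(1)) (auto simp: panels_def intro: finite_subset)

lemma sum_panels_excess_le:
  assumes "2 * T \<le> m" "0 < n" "panels k n \<noteq> {}"
    and "expected_panel_cost k xt n (\<lambda>i. single_minded (\<tau> i))
      \<le> social_opt m (real T) n (\<lambda>i. single_minded (\<tau> i)) + \<epsilon>"
  shows "(\<Sum>S\<in>panels k n. \<Sum>i<n. heavy_alloc T \<sigma> (\<tau> i)
      - panel_decision xt (\<lambda>i. single_minded (\<tau> i)) S (\<tau> i)) \<le> \<epsilon> * n * card (panels k n)"
proof -
  let ?C = "\<lambda>i. single_minded (\<tau> i)"
  have cost: "social_cost n ?C x = (\<Sum>i<n. 1 - x (\<tau> i)) / n" for x
    by (simp add: social_cost_def single_minded_def)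
  have opt: "social_opt m (real T) n ?C \<le> social_cost n ?C (heavy_alloc T \<sigma>)"
    unfolding social_opt_def
  proof (rule cINF_lower)
    have "0 \<le> social_cost n ?C x" if "x \<in> alloc_space m (real T)" for x
      using alloc_space_bounds[OF that] by (auto simp: cost intro!: divide_nonneg_nonneg sum_nonneg)
    then show "bdd_below (social_cost n ?C ` alloc_space m (real T))"
      by (intro bdd_belowI[of _ 0]) auto
  qed (rule heavy_alloc_in_alloc_space[OF assms(1)])
  have "(\<Sum>S\<in>panels k n. social_cost n ?C (panel_decision xt ?C S))
      \<le> card (panels k n) * (social_opt m (real T) n ?C + \<epsilon>)"
    using assms(3,4) finite_panels
    by (simp add: expected_panel_cost_def divide_le_eq card_gt_0_iff mult.commute)
  also have "\<dots> \<le> card (panels k n) * (social_cost n ?C (heavy_alloc T \<sigma>) + \<epsilon>)"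
    using opt by (intro mult_left_mono) auto
  finally have "(\<Sum>S\<in>panels k n.
      social_cost n ?C (panel_decision xt ?C S) - social_cost n ?C (heavy_alloc T \<sigma>))
      \<le> card (panels k n) * \<epsilon>"
    by (simp add: sum_subtractf algebra_simps)
  moreover have "social_cost n ?C (panel_decision xt ?C S) - social_cost n ?C (heavy_alloc T \<sigma>) =
      (\<Sum>i<n. heavy_alloc T \<sigma> (\<tau> i) - panel_decision xt ?C S (\<tau> i)) / n" for S
    by (simp add: cost diff_divide_distrib[symmetric] sum_subtractf[symmetric])
  ultimately show ?thesis
    using assms(2) by (simp add: sum_divide_distrib[symmetric] divide_le_eq mult_ac)
qed

lemma hard_expectation_panel_excess_ge:
  fixes \<delta> :: real
  assumes "T \<ge> 1" "\<bar>\<delta>\<bar> \<le> 1" "S \<in> panels k n"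
    and alloc: "\<And>fs. length fs = k \<Longrightarrow> set fs \<subseteq> lip_class m \<Longrightarrow> xt fs \<in> alloc_space m (real T)"
  defines "X \<equiv> \<lambda>\<omega>. panel_decision xt (\<lambda>i. single_minded (\<omega> i)) S"
  shows "(real n - real k) * hard_expectation T \<delta> \<sigma> S (\<lambda>\<omega>. regret T \<delta> \<sigma> (X \<omega>)) - real k
    \<le> (\<Sum>i<n. hard_expectation T \<delta> \<sigma> {..<n} (\<lambda>\<omega>. heavy_alloc T \<sigma> (\<omega> i) - X \<omega> (\<omega> i)))"
proof -
  let ?h = "\<lambda>j \<omega>. heavy_alloc T \<sigma> j - X \<omega> j"
  have S: "S \<subseteq> {..<n}" "card S = k" "finite S" "k \<le> n"
    using assms(3) card_mono[of "{..<n}" S] by (auto simp: panels_def intro: finite_subset)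
  have "X (\<rho>(i := j)) = X \<rho>" if "i \<notin> S" for \<rho> i j
    unfolding X_def using that by (intro panel_decision_cong) auto
  moreover have "-1 \<le> ?h j \<omega>" for j \<omega>
    using alloc_space_bounds[OF
        panel_decision_single_minded[where xt = xt and \<omega> = \<omega>, OF alloc assms(3)], where j = j]
    by (simp add: X_def heavy_alloc_def)
  ultimately have "real (card ({..<n} - S)) * hard_expectation T \<delta> \<sigma> S (\<lambda>\<omega>. regret T \<delta> \<sigma> (X \<omega>))
      - real (card S) \<le> (\<Sum>i<n. hard_expectation T \<delta> \<sigma> {..<n} (\<lambda>\<omega>. ?h (\<omega> i) \<omega>))"
    using sum_iid_expectation_ge_panel[of "{..<n}" S "hard_weight T \<delta> \<sigma>" "{..<2 * T}" ?h]
      S sum_hard_weight[OF assms(1)] assms(2)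
    by (auto simp: regret_def hard_weight_nonneg)
  then show ?thesis
    using S by (simp add: card_Diff_subset of_nat_diff)
qed

lemma sum_panels_hard_expectation_regret_le:
  fixes \<delta> \<epsilon> :: real
  assumes "T \<ge> 1" "2 * T \<le> m" "\<bar>\<delta>\<bar> \<le> 1" "1 \<le> k" "k \<le> n"
    and alloc: "\<And>fs. length fs = k \<Longrightarrow> set fs \<subseteq> lip_class m \<Longrightarrow> xt fs \<in> alloc_space m (real T)"
    and guarantee: "\<And>\<tau>. expected_panel_cost k xt n (\<lambda>i. single_minded (\<tau> i))
      \<le> social_opt m (real T) n (\<lambda>i. single_minded (\<tau> i)) + \<epsilon>"
  defines "X \<equiv> \<lambda>S \<omega>. panel_decision xt (\<lambda>i. single_minded (\<omega> i)) S"
  shows "(\<Sum>S\<in>panels k n. (real n - real k) * hard_expectation T \<delta> \<sigma> S (\<lambda>\<omega>. regret T \<delta> \<sigma> (X S \<omega>))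
    - real k) \<le> \<epsilon> * n * card (panels k n)"
proof -
  let ?E = "hard_expectation T \<delta> \<sigma> {..<n}"
  have "{..<k} \<in> panels k n"
    using assms(5) by (auto simp: panels_def)
  then have "(\<Sum>S\<in>panels k n. \<Sum>i<n. heavy_alloc T \<sigma> (\<omega> i) - X S \<omega> (\<omega> i))
      \<le> \<epsilon> * n * card (panels k n)" for \<omega>
    unfolding X_def using assms(4,5) by (intro sum_panels_excess_le[OF assms(2) _ _ guarantee]) auto
  then have "?E (\<lambda>\<omega>. \<Sum>S\<in>panels k n. \<Sum>i<n. heavy_alloc T \<sigma> (\<omega> i) - X S \<omega> (\<omega> i))
      \<le> ?E (\<lambda>_. \<epsilon> * n * card (panels k n))"
    using assms(3) by (intro iid_expectation_mono) (auto intro: hard_weight_nonneg)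
  also have "\<dots> = \<epsilon> * n * card (panels k n)"
    using sum_hard_weight[OF assms(1)] by (simp add: iid_expectation_const)
  finally have "(\<Sum>S\<in>panels k n. \<Sum>i<n. ?E (\<lambda>\<omega>. heavy_alloc T \<sigma> (\<omega> i) - X S \<omega> (\<omega> i)))
      \<le> \<epsilon> * n * card (panels k n)"
    by (simp add: iid_expectation_sum)
  moreover have "(\<Sum>S\<in>panels k n.
      (real n - real k) * hard_expectation T \<delta> \<sigma> S (\<lambda>\<omega>. regret T \<delta> \<sigma> (X S \<omega>)) - real k)
      \<le> (\<Sum>S\<in>panels k n. \<Sum>i<n. ?E (\<lambda>\<omega>. heavy_alloc T \<sigma> (\<omega> i) - X S \<omega> (\<omega> i)))"
    unfolding X_def using assms(1,3) alloc by (intro sum_mono hard_expectation_panel_excess_ge)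
  ultimately show ?thesis
    by linarith
qed

lemma panel_guarantee_bound:
  fixes \<delta> \<epsilon> :: real
  assumes "T \<ge> 1" "2 * T \<le> m" "0 < \<delta>" "\<delta> \<le> 1/2" "1 \<le> k" "k \<le> n" "k * \<delta>\<^sup>2 / T \<le> 1/256"
    and alloc: "\<And>fs. length fs = k \<Longrightarrow> set fs \<subseteq> lip_class m \<Longrightarrow> xt fs \<in> alloc_space m (real T)"
    and guarantee: "\<And>\<tau>. expected_panel_cost k xt n (\<lambda>i. single_minded (\<tau> i))
      \<le> social_opt m (real T) n (\<lambda>i. single_minded (\<tau> i)) + \<epsilon>"
  shows "(real n - real k) * (3 * \<delta> / 16) - real k \<le> \<epsilon> * n"
proof -
  let ?P = "panels k n"
  let ?\<Phi> = "\<lambda>\<sigma> S. hard_expectation T \<delta> \<sigma> S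
    (\<lambda>\<omega>. regret T \<delta> \<sigma> (panel_decision xt (\<lambda>i. single_minded (\<omega> i)) S))"
  have "{..<k} \<in> ?P"
    using assms(6) by (auto simp: panels_def)
  then have P: "card ?P > 0"
    using finite_panels by (auto simp: card_gt_0_iff)
  have "card ?P * (2 ^ T * ((real n - real k) * (3 * \<delta> / 16) - real k))
      = (\<Sum>S\<in>?P. (real n - real k) * (2 ^ T * (3 * \<delta> / 16)) - 2 ^ T * real k)"
    by (simp add: algebra_simps)
  also have "\<dots> \<le> (\<Sum>S\<in>?P. (real n - real k) * (\<Sum>\<sigma>\<in>Pow {..<T}. ?\<Phi> \<sigma> S) - 2 ^ T * real k)"
  proof (intro sum_mono diff_right_mono mult_left_mono)
    fix S assume S: "S \<in> ?P"
    then have "finite S" "card S = k"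
      by (auto simp: panels_def intro: finite_subset)
    then show "2 ^ T * (3 * \<delta> / 16) \<le> (\<Sum>\<sigma>\<in>Pow {..<T}. ?\<Phi> \<sigma> S)"
      using assms(3,4,7) by (intro sum_hard_expectation_regret_ge[OF assms(1,2) _ _ _ _
          panel_decision_single_minded[where xt = xt, OF alloc S]]) auto
  qed (use assms(6) in simp)
  also have "\<dots> = (\<Sum>S\<in>?P. \<Sum>\<sigma>\<in>Pow {..<T}. (real n - real k) * ?\<Phi> \<sigma> S - real k)"
    by (intro sum.cong refl) (simp add: sum_subtractf sum_distrib_left card_Pow)
  also have "\<dots> = (\<Sum>\<sigma>\<in>Pow {..<T}. \<Sum>S\<in>?P. (real n - real k) * ?\<Phi> \<sigma> S - real k)"
    by (rule sum.swap)
  also have "\<dots> \<le> (\<Sum>\<sigma>\<in>Pow {..<T}. \<epsilon> * n * card ?P)"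
    using assms(1-6) alloc guarantee by (intro sum_mono sum_panels_hard_expectation_regret_le) auto
  also have "\<dots> = card ?P * (2 ^ T * (\<epsilon> * n))"
    by (simp add: card_Pow)
  finally show ?thesis
    using P by simp
qed

lemma panel_size_lower_bound:
  fixes \<epsilon> :: real
  assumes "m \<ge> 2" "0 < \<epsilon>" "\<epsilon> < 1/64" "k \<ge> 1"
    and alloc: "\<forall>fs. length fs = k \<longrightarrow> set fs \<subseteq> lip_class m \<longrightarrow> xt fs \<in> alloc_space m (real (m div 2))"
    and guarantee: "\<forall>n Cost. n \<ge> k \<longrightarrow> (\<forall>i<n. pb_cost m (Cost i)) \<longrightarrow>
      expected_panel_cost k xt n Cost \<le> social_opt m (real (m div 2)) n Cost + \<epsilon>"
  shows "real (m div 2) < 16384 * real k * \<epsilon>\<^sup>2"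
proof (rule ccontr)
  assume "\<not> ?thesis"
  then have small: "k * (8 * \<epsilon>)\<^sup>2 / real (m div 2) \<le> 1/256"
    using assms(1) by (simp add: field_simps power2_eq_square)
  define N where "N = nat \<lceil>3 / \<epsilon>\<rceil>"
  have "3 / \<epsilon> \<le> N"
    unfolding N_def by (rule real_nat_ceiling_ge)
  then have N: "3 \<le> N * \<epsilon>"
    using assms(2) by (simp add: field_simps)
  have "(real (k * (N + 1)) - real k) * (3 * (8 * \<epsilon>) / 16) - real k \<le> \<epsilon> * real (k * (N + 1))"
    using assms(1-4) small alloc guarantee pb_cost_single_minded
    by (intro panel_guarantee_bound[where m = m and T = "m div 2"]) auto
  then have "real k * (N * \<epsilon> / 2 - 1 - \<epsilon>) \<le> 0"
    by (simp add: algebra_simps)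
  with assms(3,4) N show False
    by (simp add: mult_le_0_iff)
qed

theorem theorem3p3:
  shows "\<exists>c::real. c > 0 \<and>
    (\<forall>(m::nat) (\<epsilon>::real) (k::nat) (xt :: costfn list \<Rightarrow> alloc).
      m \<ge> 2 \<longrightarrow> 0 < \<epsilon> \<longrightarrow> \<epsilon> < 1/64 \<longrightarrow> k \<ge> 1 \<longrightarrow>
      (\<forall>fs. length fs = k \<longrightarrow> set fs \<subseteq> lip_class m \<longrightarrow>
            xt fs \<in> alloc_space m (real (m div 2))) \<longrightarrow>
      (\<forall>(n::nat) (Cost :: nat \<Rightarrow> costfn). n \<ge> k \<longrightarrow> (\<forall>i<n. pb_cost m (Cost i)) \<longrightarrow>
         expected_panel_cost k xt n Cost
           \<le> social_opt m (real (m div 2)) n Cost + \<epsilon>) \<longrightarrow>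
      real k \<ge> c * real m / \<epsilon>^2)"
proof (rule exI[of _ "1/49152"], intro conjI allI impI)
  show "(0::real) < 1/49152"
    by simp
next
  fix m k :: nat and \<epsilon> :: real and xt :: "costfn list \<Rightarrow> alloc"
  assume m: "m \<ge> 2" and \<epsilon>: "0 < \<epsilon>" "\<epsilon> < 1/64" and "k \<ge> 1"
    and "\<forall>fs. length fs = k \<longrightarrow> set fs \<subseteq> lip_class m \<longrightarrow> xt fs \<in> alloc_space m (real (m div 2))"
    and "\<forall>n Cost. n \<ge> k \<longrightarrow> (\<forall>i<n. pb_cost m (Cost i)) \<longrightarrow>
      expected_panel_cost k xt n Cost \<le> social_opt m (real (m div 2)) n Cost + \<epsilon>"
  then have "real (m div 2) < 16384 * real k * \<epsilon>\<^sup>2"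
    by (intro panel_size_lower_bound)
  moreover have "m \<le> 3 * (m div 2)"
    using m by presburger
  ultimately show "1/49152 * real m / \<epsilon>\<^sup>2 \<le> real k"
    using \<epsilon> by (simp add: field_simps)
qed

end
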